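(* For the additive noise model with $N$ items and $K$ defectives, random Bernoulli$(1/K)$ design and maximum-likelihood decoding, in the regime $N,K\to\infty$ with $K=o(N)$, a number of tests $T=O\!\left(\frac{K\log N}{1-q}\right)$ is achievable (arbitrarily small average error probability), where $q\in[0,1)$ is the parameter of the Bernoulli noise.
   Context: Design: $N\times T$ binary matrix with i.i.d. Bernoulli$(1/K)$ entries, $X_j(t)=1$ iff item $j$ is in test $t$. Additive noise model: for defective set $S$ ($|S|=K$), $Y(t)=\left(\bigvee_{j\in S}X_j(t)\right)\vee W(t)$ where $W(1),\dots,W(T)$ are i.i.d. Bernoulli$(q)$, independent of the design. The ML decoder chooses a $K$-subset $S'$ maximizing $p(Y^T\mid\mathbf X_{S'})$. Average error probability is averaged over the design, the noise, and $S$ uniform among $K$-subsets. *)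

theory Defs
  imports Complex_Main
begin

text \<open>Items are 0..<N, tests are 0..<T. A design is the set D of pairs (j,t)
  with X_j(t)=1; a noise realisation is the set W of tests t with W(t)=1;
  an outcome is the set of tests t with Y(t)=1.\<close>

definition design_prob :: "nat \<Rightarrow> nat \<Rightarrow> nat \<Rightarrow> (nat \<times> nat) set \<Rightarrow> real" where
  "design_prob N K T D =
     (\<Prod>p\<in>{..<N} \<times> {..<T}. if p \<in> D then 1 / real K else 1 - 1 / real K)"

definition noise_prob :: "real \<Rightarrow> nat \<Rightarrow> nat set \<Rightarrow> real" where
  "noise_prob q T W = (\<Prod>t\<in>{..<T}. if t \<in> W then q else 1 - q)"

definition outcome :: "nat \<Rightarrow> (nat \<times> nat) set \<Rightarrow> nat set \<Rightarrow> nat set \<Rightarrow> nat set" where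
  "outcome T D S W = {t. t < T \<and> ((\<exists>j\<in>S. (j, t) \<in> D) \<or> t \<in> W)}"

definition likelihood :: "real \<Rightarrow> nat \<Rightarrow> (nat \<times> nat) set \<Rightarrow> nat set \<Rightarrow> nat set \<Rightarrow> real" where
  "likelihood q T D S' Y =
     (\<Prod>t\<in>{..<T}. if (\<exists>j\<in>S'. (j, t) \<in> D)
                    then (if t \<in> Y then 1 else 0)
                    else (if t \<in> Y then q else 1 - q))"

definition subsets_K :: "nat \<Rightarrow> nat \<Rightarrow> nat set set" where
  "subsets_K N K = {S. S \<subseteq> {..<N} \<and> card S = K}"

text \<open>ML decoding error: some other K-subset has likelihood at least that of the
  true set (ties are counted as errors).\<close>
definition ml_error :: "real \<Rightarrow> nat \<Rightarrow> nat \<Rightarrow> nat \<Rightarrow> (nat \<times> nat) set \<Rightarrow> nat set \<Rightarrow> nat set \<Rightarrow> bool" where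
  "ml_error q N K T D S Y \<longleftrightarrow>
     (\<exists>S'\<in>subsets_K N K. S' \<noteq> S \<and> likelihood q T D S' Y \<ge> likelihood q T D S Y)"

definition avg_error_prob :: "real \<Rightarrow> nat \<Rightarrow> nat \<Rightarrow> nat \<Rightarrow> real" where
  "avg_error_prob q N K T =
     (1 / real (N choose K)) *
     (\<Sum>S\<in>subsets_K N K. \<Sum>D\<in>Pow ({..<N} \<times> {..<T}). \<Sum>W\<in>Pow {..<T}.
        design_prob N K T D * noise_prob q T W *
        (if ml_error q N K T D S (outcome T D S W) then 1 else 0))"

end

theory Submission
  imports Defs "HOL-Library.FuncSet"
begin

text \<open>If ML decoding fails, some non-defective item \<open>j\<close> is masked: every test containing \<open>j\<close> is
  positive anyway, because of a defective or of noise (otherwise the competing set containing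
  \<open>j\<close> has likelihood zero). Since design and noise are independent across tests, the probability
  that a fixed \<open>j\<close> is masked is \<open>(1 - \<delta>)\<^sup>T\<close>, where \<open>\<delta> = (1 - q) (1/K) (1 - 1/K)\<^sup>K \<ge> (1 - q)/(9K)\<close> is
  the probability that one test contains \<open>j\<close>, no defective and no noise. A union bound over the
  \<open>N\<close> candidates gives error at most \<open>N exp(-\<delta>T)\<close>, which is \<open>\<le> 1/N\<close> once \<open>T \<ge> 18 K ln N / (1 - q)\<close>.\<close>

lemma prod_if_zero_one:
  assumes "finite A"
  shows "(\<Prod>i\<in>A. if P i then 0 else 1::'c::comm_semiring_1) = (if \<exists>i\<in>A. P i then 0 else 1)"
  using assms by (auto intro!: prod_zero)

lemma sum_Pow_prod_mem:
  fixes h :: "'a \<Rightarrow> bool \<Rightarrow> 'c::comm_semiring_1"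
  assumes "finite A"
  shows "(\<Sum>X\<in>Pow A. \<Prod>i\<in>A. h i (i \<in> X)) = (\<Prod>i\<in>A. h i True + h i False)"
proof -
  have "(\<Prod>i\<in>A. h i True + h i False) = (\<Sum>X\<in>Pow A. (\<Prod>i\<in>X. h i True) * (\<Prod>i\<in>A - X. h i False))"
    by (rule prod_add[OF assms])
  also have "\<dots> = (\<Sum>X\<in>Pow A. \<Prod>i\<in>A. h i (i \<in> X))"
  proof (rule sum.cong[OF refl])
    fix X assume "X \<in> Pow A"
    then have "A \<inter> {i. i \<in> X} = X" "A \<inter> - {i. i \<in> X} = A - X" by auto
    then have "(\<Prod>i\<in>X. h i True) * (\<Prod>i\<in>A - X. h i False)
        = (\<Prod>i\<in>A. if i \<in> X then h i True else h i False)"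
      using prod.If_cases[OF assms, of "\<lambda>i. i \<in> X" "\<lambda>i. h i True" "\<lambda>i. h i False"] by simp
    also have "\<dots> = (\<Prod>i\<in>A. h i (i \<in> X))" by (rule prod.cong) auto
    finally show "(\<Prod>i\<in>X. h i True) * (\<Prod>i\<in>A - X. h i False) = (\<Prod>i\<in>A. h i (i \<in> X))" .
  qed
  finally show ?thesis ..
qed

lemma sum_Pow_Bernoulli_weights:
  assumes "finite A"
  shows "(\<Sum>c\<in>Pow A. \<Prod>i\<in>A. if i \<in> c then p else 1 - p) = (1::'c::comm_ring_1)"
  using sum_Pow_prod_mem[OF assms, of "\<lambda>i b. if b then p else 1 - p"] by simp

lemma sum_Pow_Bernoulli_mem_disjoint:
  fixes p :: "'a::comm_ring_1"
  assumes A: "finite A" and S: "S \<subseteq> A" and j: "j \<in> A" "j \<notin> S"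
  shows "(\<Sum>c\<in>Pow A. (\<Prod>i\<in>A. if i \<in> c then p else 1 - p) * (if j \<in> c \<and> c \<inter> S = {} then 1 else 0))
    = p * (1 - p) ^ card S" (is "?lhs = _")
proof -
  define h where "h i b = (if b then p else 1 - p) * (if (i = j \<and> \<not> b) \<or> (i \<in> S \<and> b) then 0 else 1)"
    for i and b :: bool
  have "?lhs = (\<Sum>c\<in>Pow A. \<Prod>i\<in>A. h i (i \<in> c))"
  proof (rule sum.cong[OF refl])
    fix c assume "c \<in> Pow A"
    have "(if j \<in> c \<and> c \<inter> S = {} then 1 else 0)
        = (\<Prod>i\<in>A. if (i = j \<and> i \<notin> c) \<or> (i \<in> S \<and> i \<in> c) then 0 else 1::'a)"
      using S j by (subst prod_if_zero_one[OF A]) auto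
    then show "(\<Prod>i\<in>A. if i \<in> c then p else 1 - p) * (if j \<in> c \<and> c \<inter> S = {} then 1 else 0)
        = (\<Prod>i\<in>A. h i (i \<in> c))"
      by (simp add: h_def prod.distrib)
  qed
  also have "\<dots> = (\<Prod>i\<in>A. h i True + h i False)" by (rule sum_Pow_prod_mem[OF A])
  also have "\<dots> = (\<Prod>i\<in>A. if i = j then p else if i \<in> S then 1 - p else 1)"
    using j by (intro prod.cong refl) (auto simp: h_def)
  also have "\<dots> = (\<Prod>i\<in>insert j S. if i = j then p else if i \<in> S then 1 - p else 1)"
    using S j A by (intro prod.mono_neutral_right) auto
  also have "\<dots> = p * (\<Prod>i\<in>S. if i = j then p else if i \<in> S then 1 - p else 1)"
    using j finite_subset[OF S A] by simp
  also have "(\<Prod>i\<in>S. if i = j then p else if i \<in> S then 1 - p else 1) = (\<Prod>i\<in>S. 1 - p)"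
    using j by (intro prod.cong) auto
  finally show ?thesis by simp
qed

lemma sum_Pow_Times_prod_slices:
  fixes f :: "'b \<Rightarrow> 'a set \<Rightarrow> 'c::comm_semiring_1"
  assumes "finite A" "finite B"
  shows "(\<Sum>D\<in>Pow (A \<times> B). \<Prod>t\<in>B. f t {i\<in>A. (i, t) \<in> D}) = (\<Prod>t\<in>B. \<Sum>c\<in>Pow A. f t c)"
proof -
  have "(\<Prod>t\<in>B. \<Sum>c\<in>Pow A. f t c) = (\<Sum>g\<in>B \<rightarrow>\<^sub>E Pow A. \<Prod>t\<in>B. f t (g t))"
    using assms by (intro prod_sum_PiE) auto
  also have "\<dots> = (\<Sum>D\<in>Pow (A \<times> B). \<Prod>t\<in>B. f t {i\<in>A. (i, t) \<in> D})"
  proof (rule sum.reindex_bij_witness[of _ "\<lambda>D. restrict (\<lambda>t. {i\<in>A. (i, t) \<in> D}) B"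
                                          "\<lambda>g. {(i, t). t \<in> B \<and> i \<in> g t}"])
    fix g assume g: "g \<in> B \<rightarrow>\<^sub>E Pow A"
    then show "restrict (\<lambda>t. {i\<in>A. (i, t) \<in> {(i, t). t \<in> B \<and> i \<in> g t}}) B = g"
      by (auto simp: PiE_def extensional_def fun_eq_iff)
    show "(\<Prod>t\<in>B. f t {i\<in>A. (i, t) \<in> {(i, t). t \<in> B \<and> i \<in> g t}}) = (\<Prod>t\<in>B. f t (g t))"
    proof (rule prod.cong[OF refl])
      fix t assume "t \<in> B"
      then have "{i\<in>A. (i, t) \<in> {(i, t). t \<in> B \<and> i \<in> g t}} = g t" using g by auto
      then show "f t {i\<in>A. (i, t) \<in> {(i, t). t \<in> B \<and> i \<in> g t}} = f t (g t)" by simp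
    qed
  qed auto
  finally show ?thesis ..
qed

lemma design_prob_by_tests:
  "design_prob N K T D = (\<Prod>t<T. \<Prod>i<N. if (i, t) \<in> D then 1 / real K else 1 - 1 / real K)"
  unfolding design_prob_def by (subst prod.swap) (simp add: prod.cartesian_product case_prod_unfold)

definition masked :: "nat set \<Rightarrow> nat \<Rightarrow> nat \<Rightarrow> (nat \<times> nat) set \<Rightarrow> nat set \<Rightarrow> bool" where
  "masked S j T D W \<longleftrightarrow> (\<forall>t<T. (j, t) \<in> D \<longrightarrow> t \<in> W \<or> (\<exists>i\<in>S. (i, t) \<in> D))"

text \<open>The probability that one test rules out a fixed non-defective item: it contains the item,
  none of the \<open>K\<close> defectives, and no noise.\<close>

definition detect_prob :: "real \<Rightarrow> nat \<Rightarrow> real" where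
  "detect_prob q K = (1 - q) * (1 / real K) * (1 - 1 / real K) ^ K"

lemma sum_Pow_detect_prob:
  fixes N :: nat
  assumes "S \<subseteq> {..<N}" "card S = K" "j < N" "j \<notin> S"
  shows "(\<Sum>c\<in>Pow {..<N}. (\<Prod>i<N. if i \<in> c then 1 / real K else 1 - 1 / real K) *
            (1 - (1 - q) * (if j \<in> c \<and> c \<inter> S = {} then 1 else 0))) = 1 - detect_prob q K"
proof -
  let ?w = "\<lambda>c. \<Prod>i<N. if i \<in> c then 1 / real K else 1 - 1 / real K"
  let ?revealed = "\<lambda>c. if j \<in> c \<and> c \<inter> S = {} then 1 else 0"
  have "(\<Sum>c\<in>Pow {..<N}. ?w c * (1 - (1 - q) * ?revealed c))
      = (\<Sum>c\<in>Pow {..<N}. ?w c) - (1 - q) * (\<Sum>c\<in>Pow {..<N}. ?w c * ?revealed c)"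
    unfolding right_diff_distrib mult_1_right sum_subtractf sum_distrib_left by (simp add: mult_ac)
  also have "(\<Sum>c\<in>Pow {..<N}. ?w c * ?revealed c) = 1 / real K * (1 - 1 / real K) ^ K"
    using sum_Pow_Bernoulli_mem_disjoint[of "{..<N}" S j "1 / real K"] assms by simp
  also have "(\<Sum>c\<in>Pow {..<N}. ?w c) = 1"
    by (rule sum_Pow_Bernoulli_weights) simp
  finally show ?thesis by (simp add: detect_prob_def)
qed

lemma sum_masked_prob:
  fixes N :: nat
  assumes S: "S \<subseteq> {..<N}" "card S = K" and j: "j < N" "j \<notin> S"
  shows "(\<Sum>D\<in>Pow ({..<N} \<times> {..<T}). \<Sum>W\<in>Pow {..<T}.
            design_prob N K T D * noise_prob q T W * (if masked S j T D W then 1 else 0))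
         = (1 - detect_prob q K) ^ T"
proof -
  define w where "w c = (\<Prod>i<N. if i \<in> c then 1 / real K else 1 - 1 / real K)" for c
  define revealed where "revealed c = (j \<in> c \<and> c \<inter> S = {})" for c
  define slice where "slice D t = {i\<in>{..<N}. (i, t) \<in> D}" for D :: "(nat \<times> nat) set" and t
  txt \<open>Masking is a conjunction over tests, so the whole summand factorises over tests.\<close>
  have summand: "design_prob N K T D * noise_prob q T W * (if masked S j T D W then 1 else 0)
      = (\<Prod>t<T. w (slice D t) * (if t \<in> W then q else 1 - q)
                   * (if revealed (slice D t) \<and> t \<notin> W then 0 else 1))" for D W
  proof -
    have "design_prob N K T D = (\<Prod>t<T. w (slice D t))"
      unfolding design_prob_by_tests w_def slice_def by (intro prod.cong refl) auto
    moreover have "(if masked S j T D W then 1 else 0)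
        = (\<Prod>t<T. if revealed (slice D t) \<and> t \<notin> W then 0 else 1::real)"
      using S j by (subst prod_if_zero_one) (auto simp: masked_def revealed_def slice_def)
    ultimately show ?thesis by (simp add: noise_prob_def prod.distrib)
  qed
  have "(\<Sum>W\<in>Pow {..<T}. design_prob N K T D * noise_prob q T W * (if masked S j T D W then 1 else 0))
      = (\<Prod>t<T. w (slice D t) * (1 - (1 - q) * (if revealed (slice D t) then 1 else 0)))" for D
    unfolding summand
    by (subst sum_Pow_prod_mem[of _ "\<lambda>t b. w (slice D t) * (if b then q else 1 - q)
                   * (if revealed (slice D t) \<and> \<not> b then 0 else 1)", simplified])
       (auto intro!: prod.cong simp: algebra_simps)
  then have "(\<Sum>D\<in>Pow ({..<N} \<times> {..<T}). \<Sum>W\<in>Pow {..<T}.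
            design_prob N K T D * noise_prob q T W * (if masked S j T D W then 1 else 0))
      = (\<Prod>t<T. \<Sum>c\<in>Pow {..<N}. w c * (1 - (1 - q) * (if revealed c then 1 else 0)))"
    using sum_Pow_Times_prod_slices[of "{..<N}" "{..<T}"
        "\<lambda>t c. w c * (1 - (1 - q) * (if revealed c then 1 else 0))"]
    by (simp add: slice_def)
  also have "\<dots> = (1 - detect_prob q K) ^ T"
    using sum_Pow_detect_prob[OF S j, of q] by (simp add: w_def revealed_def)
  finally show ?thesis .
qed

lemma design_prob_nonneg: "1 \<le> K \<Longrightarrow> 0 \<le> design_prob N K T D"
  unfolding design_prob_def by (intro prod_nonneg) (auto simp: field_simps)

lemma noise_prob_nonneg: "0 \<le> q \<Longrightarrow> q \<le> 1 \<Longrightarrow> 0 \<le> noise_prob q T W"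
  unfolding noise_prob_def by (intro prod_nonneg) auto

lemma likelihood_outcome_pos:
  assumes "0 \<le> q" "q < 1" "noise_prob q T W \<noteq> 0"
  shows "0 < likelihood q T D S (outcome T D S W)"
proof -
  have "0 < q" if "t < T" "t \<in> W" for t
    using assms that unfolding noise_prob_def by (force simp: prod_zero_iff)
  then show ?thesis
    using assms(2) unfolding likelihood_def outcome_def by (intro prod_pos) auto
qed

lemma likelihood_nonzero_imp_positive_test:
  assumes "likelihood q T D S Y \<noteq> 0" "t < T" "j \<in> S" "(j, t) \<in> D"
  shows "t \<in> Y"
  using assms unfolding likelihood_def by (auto simp: prod_zero_iff split: if_splits)

lemma ml_error_imp_masked:
  assumes S: "S \<in> subsets_K N K" and q: "0 \<le> q" "q < 1" and W: "noise_prob q T W \<noteq> 0"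
    and err: "ml_error q N K T D S (outcome T D S W)"
  shows "\<exists>j\<in>{..<N} - S. masked S j T D W"
proof -
  let ?Y = "outcome T D S W"
  obtain S' where S': "S' \<in> subsets_K N K" "S' \<noteq> S" "likelihood q T D S ?Y \<le> likelihood q T D S' ?Y"
    using err unfolding ml_error_def by blast
  then have L': "likelihood q T D S' ?Y \<noteq> 0"
    using likelihood_outcome_pos[OF q W, of D S] by linarith
  have "\<not> S' \<subseteq> S"
    using S S' card_subset_eq[of S S'] finite_subset[of S "{..<N}"]
    unfolding subsets_K_def by auto
  then obtain j where j: "j \<in> S'" "j \<notin> S" by blast
  have "masked S j T D W"
    unfolding masked_def
  proof (intro allI impI)
    fix t assume "t < T" "(j, t) \<in> D"
    then have "t \<in> ?Y" using likelihood_nonzero_imp_positive_test[OF L'] j by blast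
    then show "t \<in> W \<or> (\<exists>i\<in>S. (i, t) \<in> D)" unfolding outcome_def by auto
  qed
  moreover have "j \<in> {..<N} - S" using j S' unfolding subsets_K_def by auto
  ultimately show ?thesis by blast
qed

lemma ml_error_weight_le_sum_masked:
  assumes S: "S \<in> subsets_K N K" and K: "1 \<le> K" and q: "0 \<le> q" "q < 1"
  shows "design_prob N K T D * noise_prob q T W * (if ml_error q N K T D S (outcome T D S W) then 1 else 0)
     \<le> (\<Sum>j\<in>{..<N} - S. design_prob N K T D * noise_prob q T W * (if masked S j T D W then 1 else 0))"
proof -
  have nonneg: "0 \<le> design_prob N K T D * noise_prob q T W"
    using design_prob_nonneg[OF K] noise_prob_nonneg q by simp
  show ?thesis
  proof (cases "ml_error q N K T D S (outcome T D S W) \<and> noise_prob q T W \<noteq> 0")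
    case True
    then obtain j where j: "j \<in> {..<N} - S" "masked S j T D W"
      using ml_error_imp_masked[OF S q] by blast
    then have "design_prob N K T D * noise_prob q T W * (if ml_error q N K T D S (outcome T D S W) then 1 else 0)
        = design_prob N K T D * noise_prob q T W * (if masked S j T D W then 1 else 0)"
      using True by simp
    also have "\<dots> \<le> (\<Sum>j\<in>{..<N} - S. design_prob N K T D * noise_prob q T W * (if masked S j T D W then 1 else 0))"
      by (rule member_le_sum) (use j nonneg in auto)
    finally show ?thesis .
  next
    case False
    then show ?thesis using nonneg by (auto intro!: sum_nonneg)
  qed
qed

lemma detect_prob_bounds:
  assumes "1 \<le> K" "0 \<le> q" "q \<le> 1"
  shows "0 \<le> detect_prob q K" "detect_prob q K \<le> 1"
proof -
  have p: "0 \<le> 1 / real K" "1 / real K \<le> 1" "0 \<le> 1 - 1 / real K" "1 - 1 / real K \<le> 1"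
    using assms(1) by (auto simp: field_simps)
  then show "0 \<le> detect_prob q K" using assms unfolding detect_prob_def by simp
  have "(1 - q) * (1 / real K) * (1 - 1 / real K) ^ K \<le> 1 * 1 * 1"
    using p assms by (intro mult_mono power_le_one) auto
  then show "detect_prob q K \<le> 1" unfolding detect_prob_def by simp
qed

lemma avg_error_prob_nonneg:
  assumes "1 \<le> K" "0 \<le> q" "q \<le> 1"
  shows "0 \<le> avg_error_prob q N K T"
  unfolding avg_error_prob_def
  using design_prob_nonneg[OF assms(1)] noise_prob_nonneg[OF assms(2,3)]
  by (intro mult_nonneg_nonneg sum_nonneg) auto

lemma avg_error_prob_le_union_bound:
  assumes K: "1 \<le> K" and q: "0 \<le> q" "q < 1"
  shows "avg_error_prob q N K T \<le> real N * (1 - detect_prob q K) ^ T"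
proof -
  let ?c = "(1 - detect_prob q K) ^ T"
  have c: "0 \<le> ?c" using detect_prob_bounds[of K q] K q by simp
  have per_set: "(\<Sum>D\<in>Pow ({..<N} \<times> {..<T}). \<Sum>W\<in>Pow {..<T}.
        design_prob N K T D * noise_prob q T W * (if ml_error q N K T D S (outcome T D S W) then 1 else 0))
      \<le> real N * ?c" if S: "S \<in> subsets_K N K" for S
  proof -
    have "(\<Sum>D\<in>Pow ({..<N} \<times> {..<T}). \<Sum>W\<in>Pow {..<T}.
        design_prob N K T D * noise_prob q T W * (if ml_error q N K T D S (outcome T D S W) then 1 else 0))
      \<le> (\<Sum>D\<in>Pow ({..<N} \<times> {..<T}). \<Sum>W\<in>Pow {..<T}. \<Sum>j\<in>{..<N} - S.
        design_prob N K T D * noise_prob q T W * (if masked S j T D W then 1 else 0))"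
      by (intro sum_mono ml_error_weight_le_sum_masked[OF S K q])
    also have "\<dots> = (\<Sum>j\<in>{..<N} - S. \<Sum>D\<in>Pow ({..<N} \<times> {..<T}). \<Sum>W\<in>Pow {..<T}.
        design_prob N K T D * noise_prob q T W * (if masked S j T D W then 1 else 0))"
      by (subst sum.swap, subst (2) sum.swap) (rule refl)
    also have "\<dots> = (\<Sum>j\<in>{..<N} - S. ?c)"
      using S by (intro sum.cong refl sum_masked_prob) (auto simp: subsets_K_def)
    also have "\<dots> \<le> real N * ?c"
      using c card_mono[of "{..<N}" "{..<N} - S"] by (auto intro: mult_right_mono)
    finally show ?thesis .
  qed
  have card: "card (subsets_K N K) = N choose K"
    unfolding subsets_K_def using n_subsets[of "{..<N}" K] by simp
  have "avg_error_prob q N K T \<le> 1 / real (N choose K) * (\<Sum>S\<in>subsets_K N K. real N * ?c)"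
    unfolding avg_error_prob_def by (intro mult_left_mono sum_mono per_set) auto
  also have "\<dots> \<le> real N * ?c"
    using c card by simp
  finally show ?thesis .
qed

lemma one_minus_inverse_pow_ge:
  assumes "2 \<le> K"
  shows "1 / 9 \<le> (1 - 1 / real K) ^ K"
proof -
  define x where "x = 1 / real K"
  have x: "0 \<le> x" "x \<le> 1 / 2" using assms by (auto simp: x_def field_simps)
  have "-2 \<le> real K * (- x - 2 * x\<^sup>2)"
    using assms by (simp add: x_def field_simps power2_eq_square)
  also have "\<dots> \<le> real K * ln (1 - x)"
    by (intro mult_left_mono ln_one_minus_pos_lower_bound x) simp
  finally have "exp (-2) \<le> exp (ln (1 - x)) ^ K"
    by (simp flip: exp_of_nat_mult)
  also have "exp (ln (1 - x)) = 1 - x" using x by simp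
  finally have pow: "exp (-2) \<le> (1 - x) ^ K" .
  have "exp (2::real) = exp 1 * exp 1" by (simp flip: exp_add)
  also have "\<dots> \<le> 3 * 3" using exp_le by (intro mult_mono) auto
  finally have "1 / 9 \<le> exp (-2::real)" by (simp add: exp_minus field_simps)
  with pow show ?thesis by (simp add: x_def)
qed

lemma detect_prob_ge:
  assumes "2 \<le> K" "q \<le> 1"
  shows "(1 - q) / (9 * real K) \<le> detect_prob q K"
proof -
  have "(1 - q) * (1 / real K) * (1 / 9) \<le> (1 - q) * (1 / real K) * (1 - 1 / real K) ^ K"
    using one_minus_inverse_pow_ge[OF assms(1)] assms by (intro mult_left_mono) auto
  then show ?thesis by (simp add: detect_prob_def)
qed

lemma avg_error_prob_le_inverse:
  assumes K: "2 \<le> K" and N: "1 \<le> N" and q: "0 \<le> q" "q < 1"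
    and T: "18 * real K * ln (real N) / (1 - q) \<le> real T"
  shows "avg_error_prob q N K T \<le> 1 / real N"
proof -
  define d where "d = detect_prob q K"
  have d: "0 \<le> d" "d \<le> 1" "(1 - q) / (9 * real K) \<le> d"
    using detect_prob_bounds[of K q] detect_prob_ge[of K q] K q by (auto simp: d_def)
  have "2 * ln (real N) = (1 - q) / (9 * real K) * (18 * real K * ln (real N) / (1 - q))"
    using K q by (simp add: field_simps)
  also have "\<dots> \<le> d * real T"
    using d T K q N by (intro mult_mono) auto
  finally have dT: "2 * ln (real N) \<le> d * real T" .
  have "avg_error_prob q N K T \<le> real N * (1 - d) ^ T"
    using avg_error_prob_le_union_bound[of K q N T] K q by (simp add: d_def)
  also have "(1 - d) ^ T \<le> exp (- d) ^ T"
    using d by (intro power_mono) (auto simp: exp_ge_add_one_self[of "- d", simplified])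
  also have "\<dots> = exp (- (d * real T))" by (simp flip: exp_of_nat_mult add: mult.commute)
  also have "\<dots> \<le> exp (- (2 * ln (real N)))" using dT by simp
  also have "\<dots> = 1 / exp (ln (real N)) ^ 2"
    by (simp add: exp_minus exp_of_nat_mult[of 2, symmetric] field_simps)
  also have "\<dots> = 1 / real N ^ 2" using N by simp
  finally show ?thesis using N by (simp add: power2_eq_square)
qed

lemma ceiling_test_count_bounds:
  assumes K: "1 \<le> K" and N: "3 \<le> N" and q: "0 \<le> q" "q < 1"
  shows "18 * real K * ln (real N) / (1 - q) \<le> real (nat \<lceil>18 * real K * ln (real N) / (1 - q)\<rceil>)"
    and "real (nat \<lceil>18 * real K * ln (real N) / (1 - q)\<rceil>) \<le> 19 * real K * ln (real N) / (1 - q)"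
proof -
  define x where "x = real K * ln (real N) / (1 - q)"
  have "exp 1 \<le> real N" using exp_le N by linarith
  then have "1 \<le> ln (real N)" using N by (simp add: ln_ge_iff)
  then have "1 - q \<le> real K * ln (real N)"
    using K q mult_mono[of 1 "real K" 1 "ln (real N)"] by simp
  then have x: "1 \<le> x" using q by (simp add: x_def field_simps)
  have "18 * real K * ln (real N) / (1 - q) = 18 * x" "19 * real K * ln (real N) / (1 - q) = 19 * x"
    by (simp_all add: x_def)
  with x show "18 * real K * ln (real N) / (1 - q) \<le> real (nat \<lceil>18 * real K * ln (real N) / (1 - q)\<rceil>)"
    and "real (nat \<lceil>18 * real K * ln (real N) / (1 - q)\<rceil>) \<le> 19 * real K * ln (real N) / (1 - q)"
    by linarith+
qed

theorem theorem7:
  "\<exists>C>0. \<forall>q::real. 0 \<le> q \<and> q < 1 \<longrightarrow>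
     (\<forall>N K :: nat \<Rightarrow> nat.
        filterlim N at_top sequentially \<and> filterlim K at_top sequentially \<and>
        ((\<lambda>n. real (K n) / real (N n)) \<longlonglongrightarrow> 0) \<longrightarrow>
        (\<exists>T :: nat \<Rightarrow> nat.
           (\<forall>\<^sub>F n in sequentially.
              real (T n) \<le> C * real (K n) * ln (real (N n)) / (1 - q)) \<and>
           ((\<lambda>n. avg_error_prob q (N n) (K n) (T n)) \<longlonglongrightarrow> 0)))"
proof (intro exI[of _ 19] conjI allI impI)
  fix q :: real and N K :: "nat \<Rightarrow> nat"
  assume q: "0 \<le> q \<and> q < 1"
  assume "filterlim N at_top sequentially \<and> filterlim K at_top sequentially \<and>
        ((\<lambda>n. real (K n) / real (N n)) \<longlonglongrightarrow> 0)"
  then have N: "filterlim N at_top sequentially" and K: "filterlim K at_top sequentially" by auto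
  define T where "T n = nat \<lceil>18 * real (K n) * ln (real (N n)) / (1 - q)\<rceil>" for n
  have large: "\<forall>\<^sub>F n in sequentially. 2 \<le> K n \<and> 3 \<le> N n"
    using K N unfolding filterlim_at_top by (intro eventually_conj) auto
  then have "\<forall>\<^sub>F n in sequentially. real (T n) \<le> 19 * real (K n) * ln (real (N n)) / (1 - q)"
    by eventually_elim (use ceiling_test_count_bounds q in \<open>auto simp: T_def\<close>)
  moreover have "(\<lambda>n. avg_error_prob q (N n) (K n) (T n)) \<longlonglongrightarrow> 0"
  proof (rule tendsto_sandwich)
    show "\<forall>\<^sub>F n in sequentially. 0 \<le> avg_error_prob q (N n) (K n) (T n)"
      using large by eventually_elim (use avg_error_prob_nonneg q in auto)
    show "\<forall>\<^sub>F n in sequentially. avg_error_prob q (N n) (K n) (T n) \<le> 1 / real (N n)"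
      using large by eventually_elim
        (use avg_error_prob_le_inverse ceiling_test_count_bounds(1) q in \<open>auto simp: T_def\<close>)
    show "(\<lambda>n. 1 / real (N n)) \<longlonglongrightarrow> 0"
      using tendsto_inverse_0_at_top[OF filterlim_compose[OF filterlim_real_sequentially N]]
      by (simp add: inverse_eq_divide)
  qed simp
  ultimately show "\<exists>T. (\<forall>\<^sub>F n in sequentially. real (T n) \<le> 19 * real (K n) * ln (real (N n)) / (1 - q))
      \<and> (\<lambda>n. avg_error_prob q (N n) (K n) (T n)) \<longlonglongrightarrow> 0" by blast
qed simp

end
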